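(* Let $f \in \Bbbk[t] \setminus \Bbbk$. Then $L(f) = \mathbb{W}_1 \cap \mathbb{W}[f]$, where the intersection is taken inside $\Bbbk(t)\partial$.
   Context: $\Bbbk$ is a field of characteristic zero. $\mathbb{W}_1 = \mathrm{Der}(\Bbbk[t]) = \Bbbk[t]\partial$ with $\partial = d/dt$ and bracket $[f\partial, g\partial] = (fg'-f'g)\partial$; it is viewed as a Lie subalgebra of $\Bbbk(t)\partial$. For $f,g \in \Bbbk[t]\setminus\{0\}$ with $f'g \in \Bbbk[f]$, write $L(f,g) = \Bbbk[f]\,g\partial$ (a Lie subalgebra of $\mathbb{W}_1$). Let $g_f$ be the unique monic polynomial of minimal degree with $f'g_f \in \Bbbk[f]$, and put $L(f) = L(f,g_f)$. $\mathbb{W}[f] = \mathrm{Der}(\Bbbk[f]) = \Bbbk[f]\partial_f$, identified with the subalgebra $\frac{1}{f'}\Bbbk[f]\partial$ of $\Bbbk(t)\partial$ (i.e. $\partial_f = \frac{1}{f'}\partial$). *)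

theory Defs
  imports "HOL-Computational_Algebra.Polynomial_Factorial"
begin

text \<open>A derivation h \<partial> of k(t) is represented by its coefficient h :: 'a poly fract
  (an element of k(t)); the bracket plays no role in the statement.\<close>

definition in_kf :: "'a::comm_ring_1 poly \<Rightarrow> 'a poly \<Rightarrow> bool" where
  "in_kf f q \<longleftrightarrow> (\<exists>h. q = pcompose h f)"

definition gf :: "'a::field poly \<Rightarrow> 'a poly" where
  "gf f = (THE g. lead_coeff g = 1 \<and> in_kf f (pderiv f * g) \<and>
       (\<forall>g'. g' \<noteq> 0 \<longrightarrow> in_kf f (pderiv f * g') \<longrightarrow> degree g \<le> degree g'))"

definition Lfg :: "'a::field poly \<Rightarrow> 'a poly \<Rightarrow> 'a poly fract set" where
  "Lfg f g = {to_fract (pcompose h f * g) | h. True}"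

definition Lf :: "'a::field poly \<Rightarrow> 'a poly fract set" where
  "Lf f = Lfg f (gf f)"

definition W1 :: "'a::field poly fract set" where
  "W1 = range to_fract"

text \<open>W[f] = k[f] \<partial>_f = (1/f') k[f] \<partial> inside k(t) \<partial>.\<close>
definition Wf :: "'a::field poly \<Rightarrow> 'a poly fract set" where
  "Wf f = {to_fract (pcompose h f) / to_fract (pderiv f) | h. True}"

end

(*
  Since f' \<noteq> 0, the elements of W\<^sub>1 \<inter> W[f] are the g \<partial> with g \<in> k[t] and f' g \<in> k[f].
  These g form a k[f]-module, which is nonzero because f' divides a nonzero element of k[f]
  (the residues of 1, f, ..., f^(deg f') modulo f' are linearly dependent). Comparing degrees
  in f' g = a(f) shows that the degrees of all nonzero such g agree modulo deg f, so the
  leading term of any such g is cancelled by c f^m g_f; by induction on the degree every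
  such g lies in k[f] g_f.
*)

theory Submission
  imports Defs
begin

interpretation poly_smult: vector_space "smult :: 'a::field \<Rightarrow> 'a poly \<Rightarrow> 'a poly"
  by unfold_locales (simp_all add: smult_add_right smult_add_left)

lemma pcompose_monom: "pcompose (monom c n) q = smult c (q ^ n)"
  by (induction n) (simp_all add: monom_Suc pcompose_pCons monom_0)

lemma poly_eq_sum_monoms_below:
  assumes "\<And>k. k \<ge> d \<Longrightarrow> coeff p k = 0"
  shows "p = (\<Sum>k<d. monom (coeff p k) k)"
  using assms by (auto simp: poly_eq_iff coeff_sum not_le)

lemma coeff_mod_eq_0:
  fixes x p :: "'a::field poly"
  assumes "p \<noteq> 0" "k \<ge> degree p"
  shows "coeff (x mod p) k = 0"
proof (cases "x mod p = 0")
  case False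
  then show ?thesis using degree_mod_less[OF assms(1), of x] assms(2) by (simp add: coeff_eq_0)
qed simp

lemma mod_in_span_monoms:
  fixes x p :: "'a::field poly"
  assumes "p \<noteq> 0"
  shows "x mod p \<in> poly_smult.span ((\<lambda>k. monom 1 k) ` {..<degree p})"
proof -
  have "x mod p = (\<Sum>k<degree p. smult (coeff (x mod p) k) (monom 1 k))"
    using poly_eq_sum_monoms_below[of "degree p" "x mod p"] coeff_mod_eq_0[OF assms]
    by (simp add: smult_monom)
  also have "\<dots> \<in> poly_smult.span ((\<lambda>k. monom 1 k) ` {..<degree p})"
    by (intro poly_smult.span_sum poly_smult.span_scale poly_smult.span_base) auto
  finally show ?thesis .
qed

lemma exists_nonzero_pcompose_multiple:
  fixes p q :: "'a::field poly"
  assumes "p \<noteq> 0"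
  shows "\<exists>h. h \<noteq> 0 \<and> p dvd pcompose h q"
proof -
  define d where "d = degree p"
  define v where "v i = (q ^ i) mod p" for i
  show ?thesis
  proof (cases "inj_on v {..d}")
    case False
    then obtain i j where ij: "i \<noteq> j" "v i = v j"
      unfolding inj_on_def by auto
    have "monom 1 j - monom (1::'a) i \<noteq> 0"
      using ij(1) by (metis coeff_diff coeff_monom diff_zero one_neq_zero coeff_0)
    moreover have "p dvd pcompose (monom 1 j - monom 1 i) q"
      using ij(2)[symmetric] by (simp add: v_def pcompose_diff pcompose_monom mod_eq_dvd_iff)
    ultimately show ?thesis by blast
  next
    case True
    have "poly_smult.dependent (v ` {..d})"
    proof (rule ccontr)
      assume indep: "\<not> poly_smult.dependent (v ` {..d})"
      have "v ` {..d} \<subseteq> poly_smult.span ((\<lambda>k. monom 1 k) ` {..<d})"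
        using mod_in_span_monoms[OF assms] by (auto simp: v_def d_def)
      from poly_smult.independent_span_bound[OF _ indep this]
      have "card (v ` {..d}) \<le> card ((\<lambda>k. monom (1::'a) k) ` {..<d})" by simp
      also have "\<dots> \<le> d" using card_image_le[of "{..<d}"] by simp
      finally show False using True by (simp add: card_image)
    qed
    then obtain u where u: "\<exists>w\<in>v ` {..d}. u w \<noteq> 0" "(\<Sum>w\<in>v ` {..d}. smult (u w) w) = 0"
      using poly_smult.dependent_finite[of "v ` {..d}"] by auto
    define h where "h = (\<Sum>i\<le>d. monom (u (v i)) i)"
    have "h \<noteq> 0"
    proof
      assume "h = 0"
      moreover obtain i where "i \<le> d" "u (v i) \<noteq> 0" using u(1) by auto
      moreover have "coeff h i = u (v i)" if "i \<le> d" for i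
        using that by (simp add: h_def coeff_sum)
      ultimately show False by simp
    qed
    moreover have "p dvd pcompose h q"
    proof -
      have "(\<Sum>i\<le>d. smult (u (v i)) (v i)) = 0"
        using u(2) True by (simp add: sum.reindex)
      then have "pcompose h q = (\<Sum>i\<le>d. smult (u (v i)) (q ^ i - v i))"
        by (simp add: h_def pcompose_sum pcompose_monom smult_diff_right sum_subtractf)
      also have "p dvd \<dots>"
        by (intro dvd_sum dvd_smult) (simp add: v_def mod_eq_dvd_iff[symmetric])
      finally show ?thesis .
    qed
    ultimately show ?thesis by blast
  qed
qed

lemma degree_diff_less_same_lead:
  fixes p q :: "'a::field poly"
  assumes "degree p = degree q" "lead_coeff p = lead_coeff q" "p \<noteq> q"
  shows "degree (p - q) < degree p"
proof -
  have "coeff (p - q) (degree p) = 0" using assms(1,2) by simp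
  moreover have "lead_coeff (p - q) \<noteq> 0"
    using assms(3) leading_coeff_neq_0[of "p - q"] by simp
  ultimately have "degree (p - q) \<noteq> degree p" by metis
  with degree_diff_le[of p "degree p" q] assms(1) show ?thesis by simp
qed

lemma in_kf_diff: "in_kf f p \<Longrightarrow> in_kf f q \<Longrightarrow> in_kf f (p - q)"
  unfolding in_kf_def by (metis pcompose_diff)

lemma in_kf_pcompose_mult: "in_kf f p \<Longrightarrow> in_kf f (pcompose a f * p)"
  unfolding in_kf_def by (metis pcompose_mult)

text \<open>For \<open>g \<in> k[t]\<close>, \<open>g \<partial> \<in> W[f]\<close> means \<open>f' g \<in> k[f]\<close>; such \<open>g\<close> are called admissible for \<open>f\<close>.\<close>
definition admissible :: "'a::idom poly \<Rightarrow> 'a poly \<Rightarrow> bool" where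
  "admissible f g \<longleftrightarrow> in_kf f (pderiv f * g)"

lemma admissible_diff: "admissible f g \<Longrightarrow> admissible f g' \<Longrightarrow> admissible f (g - g')"
  unfolding admissible_def by (simp add: in_kf_diff right_diff_distrib)

lemma admissible_pcompose_mult: "admissible f g \<Longrightarrow> admissible f (pcompose a f * g)"
  unfolding admissible_def using in_kf_pcompose_mult[of f "pderiv f * g" a]
  by (simp add: mult.left_commute)

lemma admissible_smult: "admissible f g \<Longrightarrow> admissible f (smult c g)"
  using admissible_pcompose_mult[of f g "[:c:]"] by simp

lemma W1_inter_Wf:
  fixes f :: "'a::field poly"
  assumes "pderiv f \<noteq> 0"
  shows "W1 \<inter> Wf f = to_fract ` {g. admissible f g}"
proof -
  have "to_fract g = to_fract (pcompose h f) / to_fract (pderiv f) \<longleftrightarrow> pderiv f * g = pcompose h f"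
    for g h :: "'a poly"
    using assms by (simp add: eq_divide_eq mult.commute flip: to_fract_mult)
  then show ?thesis
    unfolding W1_def Wf_def admissible_def in_kf_def by blast
qed

lemma exists_nonzero_admissible:
  fixes f :: "'a::field_char_0 poly"
  assumes "degree f \<ge> 1"
  shows "\<exists>g. g \<noteq> 0 \<and> admissible f g"
proof -
  have "pderiv f \<noteq> 0" using assms by (simp add: pderiv_eq_0_iff)
  then obtain h where h: "h \<noteq> 0" "pderiv f dvd pcompose h f"
    using exists_nonzero_pcompose_multiple by blast
  then obtain g where g: "pcompose h f = pderiv f * g" by (elim dvdE)
  have "pcompose h f \<noteq> 0" using h(1) assms pcompose_eq_0 by fastforce
  with g show ?thesis unfolding admissible_def in_kf_def by (metis mult_zero_right)
qed

lemma degree_admissible: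
  fixes f :: "'a::field_char_0 poly"
  assumes "pderiv f * g = pcompose a f" "g \<noteq> 0" "degree f \<ge> 1"
  shows "degree g + (degree f - 1) = degree f * degree a"
proof -
  have "pderiv f \<noteq> 0" using assms(3) by (simp add: pderiv_eq_0_iff)
  then have "degree (pderiv f * g) = degree f - 1 + degree g"
    using assms(2) by (simp add: degree_mult_eq degree_pderiv)
  with assms(1) show ?thesis by (simp add: degree_pcompose mult.commute)
qed

lemma admissible_degree_step:
  fixes f :: "'a::field_char_0 poly"
  assumes "degree f \<ge> 1" "admissible f g0" "g0 \<noteq> 0" "admissible f g" "g \<noteq> 0"
    and "degree g0 \<le> degree g"
  shows "\<exists>m. degree g = degree g0 + degree f * m"
proof -
  obtain a0 a where "pderiv f * g0 = pcompose a0 f" "pderiv f * g = pcompose a f"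
    using assms(2,4) unfolding admissible_def in_kf_def by blast
  then have d0: "degree g0 + (degree f - 1) = degree f * degree a0"
    and d: "degree g + (degree f - 1) = degree f * degree a"
    using degree_admissible assms by blast+
  then have "degree f * degree a0 \<le> degree f * degree a" using assms(6) by linarith
  then have "degree a0 \<le> degree a" using assms(1) by simp
  then have "degree f * degree a = degree f * degree a0 + degree f * (degree a - degree a0)"
    by (simp add: diff_mult_distrib2)
  with d d0 show ?thesis by (intro exI[of _ "degree a - degree a0"]) linarith
qed

lemma admissible_imp_kf_multiple:
  fixes f :: "'a::field_char_0 poly"
  assumes "degree f \<ge> 1" "admissible f g0" "g0 \<noteq> 0"
    and minimal: "\<And>g. g \<noteq> 0 \<Longrightarrow> admissible f g \<Longrightarrow> degree g0 \<le> degree g"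
    and "admissible f g"
  shows "\<exists>h. g = pcompose h f * g0"
  using \<open>admissible f g\<close>
proof (induction "degree g" arbitrary: g rule: less_induct)
  case less
  show ?case
  proof (cases "g = 0")
    case True
    then show ?thesis by (intro exI[of _ 0]) simp
  next
    case False
    obtain m where m: "degree g = degree g0 + degree f * m"
      using admissible_degree_step[OF assms(1-3) less.prems False minimal[OF False less.prems]] by blast
    define c where "c = lead_coeff g / lead_coeff (f ^ m * g0)"
    define t where "t = pcompose (monom c m) f * g0"
    have f0: "f \<noteq> 0" using assms(1) by auto
    have t: "t = smult c (f ^ m * g0)" by (simp add: t_def pcompose_monom)
    have "c \<noteq> 0" using False f0 assms(3) by (simp add: c_def)
    then have deg_t: "degree t = degree g"
      using f0 assms(3) m by (simp add: t degree_mult_eq degree_power_eq)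
    have lead_t: "lead_coeff t = lead_coeff g"
      using f0 assms(3) by (simp add: t c_def lead_coeff_smult)
    have "admissible f (g - t)"
      unfolding t_def by (intro admissible_diff admissible_pcompose_mult less.prems assms(2))
    show ?thesis
    proof (cases "g = t")
      case True
      then show ?thesis unfolding t_def by blast
    next
      case False
      then have "degree (g - t) < degree g"
        using degree_diff_less_same_lead[OF deg_t[symmetric] lead_t[symmetric]] by blast
      then obtain h where "g - t = pcompose h f * g0"
        using less.hyps \<open>admissible f (g - t)\<close> by blast
      then have "g = pcompose (h + monom c m) f * g0"
        by (simp add: t_def pcompose_add algebra_simps)
      then show ?thesis by blast
    qed
  qed
qed

lemma ex1_minimal_monic_admissible:
  fixes f :: "'a::field_char_0 poly"
  assumes "degree f \<ge> 1"
  shows "\<exists>!g. lead_coeff g = 1 \<and> admissible f g \<and>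
    (\<forall>g'. g' \<noteq> 0 \<longrightarrow> admissible f g' \<longrightarrow> degree g \<le> degree g')"
    (is "\<exists>!g. ?minimal g")
proof (rule ex_ex1I)
  obtain g1 where g1: "g1 \<noteq> 0" "admissible f g1"
    and min: "\<And>g. g \<noteq> 0 \<Longrightarrow> admissible f g \<Longrightarrow> degree g1 \<le> degree g"
    using ex_has_least_nat[where m = degree and P = "\<lambda>g. g \<noteq> 0 \<and> admissible f g"]
      exists_nonzero_admissible[OF assms] by blast
  have "?minimal (smult (inverse (lead_coeff g1)) g1)"
    using g1 min by (simp add: admissible_smult lead_coeff_smult)
  then show "\<exists>g. ?minimal g" by blast
next
  fix g g' assume g: "?minimal g" and g': "?minimal g'"
  then have "g \<noteq> 0" "g' \<noteq> 0" by auto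
  with g g' have "degree g = degree g'" by (simp add: le_antisym)
  show "g = g'"
  proof (rule ccontr)
    assume "g \<noteq> g'"
    with \<open>degree g = degree g'\<close> g g' have "degree (g - g') < degree g"
      by (intro degree_diff_less_same_lead) auto
    moreover have "admissible f (g - g')" using g g' by (simp add: admissible_diff)
    then have "degree g \<le> degree (g - g')" using g \<open>g \<noteq> g'\<close> by simp
    ultimately show False by simp
  qed
qed

lemma gf_minimal:
  fixes f :: "'a::field_char_0 poly"
  assumes "degree f \<ge> 1"
  shows "lead_coeff (gf f) = 1" "admissible f (gf f)"
    and "\<And>g. g \<noteq> 0 \<Longrightarrow> admissible f g \<Longrightarrow> degree (gf f) \<le> degree g"
  using theI'[OF ex1_minimal_monic_admissible[OF assms]]
  unfolding gf_def admissible_def by blast+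

lemma Lf_eq_admissible:
  fixes f :: "'a::field_char_0 poly"
  assumes "degree f \<ge> 1"
  shows "Lf f = to_fract ` {g. admissible f g}"
proof -
  note gf = gf_minimal[OF assms]
  have "gf f \<noteq> 0" using gf(1) by auto
  have "{g. admissible f g} = {pcompose h f * gf f | h. True}"
    using admissible_imp_kf_multiple[OF assms gf(2) \<open>gf f \<noteq> 0\<close> gf(3)]
      admissible_pcompose_mult[OF gf(2)] by auto
  then show ?thesis unfolding Lf_def Lfg_def by (auto simp: image_def simp del: to_fract_mult)
qed

theorem mainTheorem1:
  fixes f :: "'k::field_char_0 poly"
  assumes "degree f \<ge> 1"
  shows "Lf f = W1 \<inter> Wf f"
proof -
  have "pderiv f \<noteq> 0" using assms by (simp add: pderiv_eq_0_iff)
  with Lf_eq_admissible[OF assms] show ?thesis by (simp add: W1_inter_Wf)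
qed

end
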